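(* Consider problem (RCL) as defined in the context, and suppose: (A1) for every $i\in\{1,\dots,m\}$, $\mathcal{D}_{\boldsymbol{X}_i}$ is absolutely continuous with respect to $\mathcal{D}_{\boldsymbol{X}_0}$, and $\mathcal{D}_{\boldsymbol{X}_0}$ is nonatomic; (A2) for each $i\in\{0,\dots,m\}$ and every $\boldsymbol f\in\mathcal F$, the function $(\boldsymbol x,y)\mapsto \ell_i(\boldsymbol f(\boldsymbol x),y)$ belongs to $\mathcal{Z}^i_2=\mathcal{L}_{p'}(\mathcal{D}_i,\mathbb{R})$, and $\mathcal F$ is decomposable. Then for each $i\in\{1,\dots,m\}$ there exist a convex, proper, lower-semicontinuous and positively homogeneous risk measure $\widetilde{\rho}_i:\mathcal{L}_1(\mathcal{D}_{\boldsymbol{X}_0},\mathbb{R})\to\mathbb{R}$ and a function $G_i:\mathbb{R}^k\times\mathbb{R}^d\to\mathbb{R}$ with $G_i(\boldsymbol f(\cdot),\cdot)\in\mathcal{L}_1(\mathcal{D}_{\boldsymbol{X}_0},\mathbb{R})$ for all $\boldsymbol f\in\mathcal F$, such that for every $\boldsymbol f\in\mathcal F$, $$\rho_0\big(\widehat\rho_0(\ell_0(\boldsymbol f(\boldsymbol X_0),Y_0)\mid \boldsymbol X_0)\big)=\rho_0\big(F_0(\boldsymbol f(\boldsymbol X_0),\boldsymbol X_0)\big),$$ $$\rho_i\big(\widehat\rho_i(\ell_i(\boldsymbol f(\boldsymbol X_i),Y_i)\mid \boldsymbol X_i)\big)=\widetilde\rho_i\big(G_i(\boldsymbol f(\boldsymbol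 X_0),\boldsymbol X_0)\big),\quad i=1,\dots,m.$$ Consequently (RCL) is equivalent to the problem $$\min_{\boldsymbol f\in\mathcal F}\ \rho_0\big(F_0(\boldsymbol f(\boldsymbol X_0),\boldsymbol X_0)\big)\quad\text{s.t.}\quad \widetilde\rho_i\big(G_i(\boldsymbol f(\boldsymbol X_0),\boldsymbol X_0)\big)\le c_i,\ i=1,\dots,m,$$ in which all risk terms are evaluated on functions of the single random vector $\boldsymbol X_0$ with distribution $\mathcal D_{\boldsymbol X_0}$.
   Context: Let $(\Omega,\mathscr F,\mu)$ be a complete probability space. For $i\in\{0,1,\dots,m\}$, let $(\boldsymbol X_i,Y_i):\Omega\to\mathbb R^d\times\mathbb R$ be random pairs with Borel distributions $\mathcal D_i$ on $\mathbb R^d\times\mathbb R$; $\mathcal D_{\boldsymbol X_i}$ denotes the marginal of $\boldsymbol X_i$ and $\mathcal D_{Y_i|\boldsymbol X_i}$ the conditional distribution of $Y_i$ given $\boldsymbol X_i$. A measure $P$ is nonatomic if every event $E$ with $P(E)>0$ contains an event $E'$ with $P(E)>P(E')>0$. Conditional risk mappings: fix $p,p'\in[1,\infty]$ and set $\mathcal Z^i_1=\mathcal L_p(\Omega,\sigma(\boldsymbol X_i),\mu;\mathbb R)$, $\mathcal Z^i_2=\mathcal L_{p'}(\mathcal D_i,\mathbb R)$, $\mathcal Z^i_3=\mathcal L_{p'}(\mathcal D_{Y_i|\boldsymbol X_i},\mathbb R)$. A conditional risk mapping is a map $\widehat\rho(\cdot\mid\boldsymbol X_i):\mathcal Z^i_2\to\mathcal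 Z^i_1$ such that for every Borel $Z:\mathbb R^{d+1}\to\mathbb R$ in $\mathcal Z^i_2$ and every $\omega\in\Omega$, $\widehat\rho(Z(\boldsymbol X_i,Y_i)\mid\boldsymbol X_i)(\omega)=\widehat\rho(Z(\boldsymbol x,Y_i)\mid\boldsymbol X_i)(\omega)\big|_{\boldsymbol x=\boldsymbol X_i(\omega)}$ (substitution rule), where for fixed $\boldsymbol x$ the instantiation $\widehat\rho(Z(\boldsymbol x,\cdot)\mid\boldsymbol X_i)(\omega)$ is a real-valued risk functional on $\mathcal Z^i_3$. No convexity, monotonicity or homogeneity is required of $\widehat\rho$ (examples: conditional expectation, conditional CVaR, conditional mean-upper-semideviation). Problem (RCL): let $\ell_i:\mathbb R^k\times\mathbb R\to\mathbb R_+$ ($i=0,\dots,m$) be arbitrary (possibly nonconvex, discontinuous) loss functions, $c_i\in\mathbb R$, $\mathcal F$ a set of measurable functions $\boldsymbol f:\mathbb R^d\to\mathbb R^k$, $\widehat\rho_i(\cdot\mid\boldsymbol X_i)$ conditional risk mappings, and $\rho_i:\mathcal L_1(\mathcal D_{\boldsymbol X_i},\mathbb R)\to\mathbb R$ real-valued, convex, lower semicontinuous and positively homogeneous risk measures (equivalently, $\rho_i(Z)=\sup_{\zeta\in\mathbb A_i}\int\zeta Z\,d\mathcal D_{\boldsymbol X_i}$ for a bounded set $\mathbb A_i\subseteq\mathcal L_\infty(\mathcal D_{\boldsymbol X_i},\mathbb R)$). (RCL) is: minimize over $\boldsymbol f\in\mathcal F$ the quantity $\rho_0(\widehat\rho_0(\ell_0(\boldsymbol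 f(\boldsymbol X_0),Y_0)\mid\boldsymbol X_0))$ subject to $\rho_i(\widehat\rho_i(\ell_i(\boldsymbol f(\boldsymbol X_i),Y_i)\mid\boldsymbol X_i))\le c_i$ for $i=1,\dots,m$. $F_i$: for $\boldsymbol z\in\mathbb R^k$ and $\boldsymbol x\in\mathbb R^d$, $F_i(\boldsymbol z,\boldsymbol x)$ denotes the value of $\widehat\rho_i(\ell_i(\boldsymbol z,Y_i)\mid\boldsymbol X_i)$ at $\boldsymbol X_i=\boldsymbol x$, so that by the substitution rule $\widehat\rho_i(\ell_i(\boldsymbol f(\boldsymbol X_i),Y_i)\mid\boldsymbol X_i)=F_i(\boldsymbol f(\boldsymbol X_i),\boldsymbol X_i)$ and $F_i(\boldsymbol f(\cdot),\cdot)\in\mathcal L_p(\mathcal D_{\boldsymbol X_i},\mathbb R)$. A set $\mathcal F$ of measurable functions on $\mathbb R^d$ is decomposable if for all $\boldsymbol f,\boldsymbol g\in\mathcal F$ and every Borel set $E\subseteq\mathbb R^d$, the function $\boldsymbol f\mathbf 1_E+\boldsymbol g\mathbf 1_{E^c}$ belongs to $\mathcal F$. *)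

theory Defs
  imports "HOL-Probability.Probability"
begin

definition memLp :: "'a measure \<Rightarrow> ennreal \<Rightarrow> ('a \<Rightarrow> real) \<Rightarrow> bool" where
  "memLp P p f \<longleftrightarrow> f \<in> borel_measurable P \<and>
     (if p = \<infinity> then (\<exists>C. AE x in P. \<bar>f x\<bar> \<le> C)
      else integrable P (\<lambda>x. \<bar>f x\<bar> powr enn2real p))"

definition nonatomic :: "'a measure \<Rightarrow> bool" where
  "nonatomic P \<longleftrightarrow> (\<forall>E\<in>sets P. 0 < measure P E \<longrightarrow>
      (\<exists>E'\<in>sets P. E' \<subseteq> E \<and> 0 < measure P E' \<and> measure P E' < measure P E))"

definition decomposable :: "('a::topological_space \<Rightarrow> 'b) set \<Rightarrow> bool" where
  "decomposable FF \<longleftrightarrow> (\<forall>f\<in>FF. \<forall>g\<in>FF. \<forall>E\<in>sets borel.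
      (\<lambda>x. if x \<in> E then f x else g x) \<in> FF)"

text \<open>A real-valued (hence proper), convex, lower semicontinuous, positively homogeneous
  functional on L_1(P): it is well defined on equivalence classes, convex and positively
  homogeneous on integrable functions, and lsc with respect to L_1 convergence.\<close>
definition risk_measure_L1 :: "'a measure \<Rightarrow> (('a \<Rightarrow> real) \<Rightarrow> real) \<Rightarrow> bool" where
  "risk_measure_L1 P \<rho> \<longleftrightarrow>
     (\<forall>Z W. integrable P Z \<longrightarrow> integrable P W \<longrightarrow> (AE x in P. Z x = W x) \<longrightarrow> \<rho> Z = \<rho> W) \<and>
     (\<forall>Z W t. integrable P Z \<longrightarrow> integrable P W \<longrightarrow> 0 \<le> t \<longrightarrow> t \<le> 1 \<longrightarrow>
        \<rho> (\<lambda>x. t * Z x + (1 - t) * W x) \<le> t * \<rho> Z + (1 - t) * \<rho> W) \<and>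
     (\<forall>Z t. integrable P Z \<longrightarrow> 0 < t \<longrightarrow> \<rho> (\<lambda>x. t * Z x) = t * \<rho> Z) \<and>
     (\<forall>Z Zs. integrable P Z \<longrightarrow> (\<forall>n. integrable P (Zs n)) \<longrightarrow>
        (\<lambda>n. \<integral>x. \<bar>Zs n x - Z x\<bar> \<partial>P) \<longlonglongrightarrow> 0 \<longrightarrow>
        ereal (\<rho> Z) \<le> liminf (\<lambda>n. ereal (\<rho> (Zs n))))"

text \<open>Conditional risk mapping rhat(. | X) from L_p'(D) (D the law of (X,Y)) to
  L_p(Omega, sigma(X)); an argument Z(X,Y) is represented by the Borel function Z,
  with the substitution rule.\<close>
definition cond_risk_mapping ::
  "'w measure \<Rightarrow> ('w \<Rightarrow> 'x::topological_space) \<Rightarrow> ('w \<Rightarrow> real) \<Rightarrow> ennreal \<Rightarrow> ennreal \<Rightarrow>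
   (('x \<Rightarrow> real \<Rightarrow> real) \<Rightarrow> 'w \<Rightarrow> real) \<Rightarrow> bool" where
  "cond_risk_mapping M X Y p p' rhat \<longleftrightarrow>
     (\<forall>Z. memLp (distr M borel (\<lambda>w. (X w, Y w))) p' (case_prod Z) \<longrightarrow>
        rhat Z \<in> borel_measurable (vimage_algebra (space M) X borel) \<and> memLp M p (rhat Z) \<and>
        (\<forall>w. rhat Z w = rhat (\<lambda>_ y. Z (X w) y) w))"

definition cond_rep :: "'w measure \<Rightarrow> ('w \<Rightarrow> 'x::topological_space) \<Rightarrow> ('w \<Rightarrow> real) \<Rightarrow> ('x \<Rightarrow> real) \<Rightarrow> bool" where
  "cond_rep M X V g \<longleftrightarrow> g \<in> borel_measurable borel \<and> (AE w in M. V w = g (X w))"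

end

theory Submission
  imports Defs
begin

text \<open>By absolute continuity the law of \<open>X\<^sub>i\<close> has a density \<open>D\<^sub>i\<close> with respect to the law of
  \<open>X\<^sub>0\<close>, so every \<open>\<rho>\<^sub>i\<close> can be pulled back to \<open>L\<^sub>1\<close> of the law of \<open>X\<^sub>0\<close> as
  \<open>\<rho>\<^sub>i(W / D\<^sub>i)\<close>; since division by the density is an \<open>L\<^sub>1\<close>-contraction, law invariance,
  convexity, positive homogeneity and lower semicontinuity survive. With \<open>G\<^sub>i(z, x) = F\<^sub>i(z, x) D\<^sub>i(x)\<close>
  the quotient recovers \<open>F\<^sub>i\<close> almost surely under the law of \<open>X\<^sub>i\<close>. The substitution rule makes
  \<open>F\<^sub>i(f(\<cdot>), \<cdot>)\<close> a representative of the conditional risk as a function of \<open>X\<^sub>i\<close>, and law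
  invariance makes the choice of representative irrelevant.\<close>

lemma memLp_imp_integrable:
  assumes "prob_space P" "1 \<le> p" "memLp P p f"
  shows "integrable P f"
proof -
  interpret prob_space P by fact
  have f: "f \<in> borel_measurable P" using assms(3) by (simp add: memLp_def)
  show ?thesis
  proof (cases "p = \<infinity>")
    case True
    then obtain C where "AE x in P. \<bar>f x\<bar> \<le> C" using assms(3) by (auto simp: memLp_def)
    then show ?thesis by (intro Bochner_Integration.integrable_bound[of P "\<lambda>_. C" f] f) auto
  next
    case False
    let ?q = "enn2real p"
    have q: "1 \<le> ?q" using assms(2) False
      by (metis enn2real_1 enn2real_mono infinity_ennreal_def less_top)
    have "integrable P (\<lambda>x. 1 + \<bar>f x\<bar> powr ?q)" using assms(3) False by (simp add: memLp_def)
    moreover have "\<bar>f x\<bar> \<le> 1 + \<bar>f x\<bar> powr ?q" for x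
    proof (cases "\<bar>f x\<bar> \<le> 1")
      case False
      then have "\<bar>f x\<bar> powr 1 \<le> \<bar>f x\<bar> powr ?q" using q by (intro powr_mono) auto
      then show ?thesis using False by simp
    qed (smt (verit) powr_ge_zero)
    ultimately show ?thesis by (intro Bochner_Integration.integrable_bound[OF _ f]) auto
  qed
qed

lemma risk_measure_L1_AE_cong:
  assumes "risk_measure_L1 P \<rho>" "integrable P Z" "W \<in> borel_measurable P" "AE x in P. Z x = W x"
  shows "\<rho> Z = \<rho> W"
proof -
  have "\<forall>Z W. integrable P Z \<longrightarrow> integrable P W \<longrightarrow> (AE x in P. Z x = W x) \<longrightarrow> \<rho> Z = \<rho> W"
    using assms(1) unfolding risk_measure_L1_def by (elim conjE) assumption
  then show ?thesis using integrable_cong_AE_imp[OF assms(2,3,4)] assms(2,4) by blast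
qed

lemma risk_measure_L1_convex:
  assumes "risk_measure_L1 P \<rho>" "integrable P Z" "integrable P W" "0 \<le> t" "t \<le> 1"
  shows "\<rho> (\<lambda>x. t * Z x + (1 - t) * W x) \<le> t * \<rho> Z + (1 - t) * \<rho> W"
proof -
  have "\<forall>Z W t. integrable P Z \<longrightarrow> integrable P W \<longrightarrow> 0 \<le> t \<longrightarrow> t \<le> 1 \<longrightarrow>
        \<rho> (\<lambda>x. t * Z x + (1 - t) * W x) \<le> t * \<rho> Z + (1 - t) * \<rho> W"
    using assms(1) unfolding risk_measure_L1_def by (elim conjE) assumption
  then show ?thesis using assms(2-5) by blast
qed

lemma risk_measure_L1_pos_homogeneous:
  assumes "risk_measure_L1 P \<rho>" "integrable P Z" "0 < t"
  shows "\<rho> (\<lambda>x. t * Z x) = t * \<rho> Z"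
proof -
  have "\<forall>Z t. integrable P Z \<longrightarrow> 0 < t \<longrightarrow> \<rho> (\<lambda>x. t * Z x) = t * \<rho> Z"
    using assms(1) unfolding risk_measure_L1_def by (elim conjE) assumption
  then show ?thesis using assms(2,3) by blast
qed

lemma risk_measure_L1_lsc:
  assumes "risk_measure_L1 P \<rho>" "integrable P Z" "\<And>n. integrable P (Zs n)"
    "(\<lambda>n. \<integral>x. \<bar>Zs n x - Z x\<bar> \<partial>P) \<longlonglongrightarrow> 0"
  shows "ereal (\<rho> Z) \<le> liminf (\<lambda>n. ereal (\<rho> (Zs n)))"
proof -
  have "\<forall>Z Zs. integrable P Z \<longrightarrow> (\<forall>n. integrable P (Zs n)) \<longrightarrow>
        (\<lambda>n. \<integral>x. \<bar>Zs n x - Z x\<bar> \<partial>P) \<longlonglongrightarrow> 0 \<longrightarrow>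
        ereal (\<rho> Z) \<le> liminf (\<lambda>n. ereal (\<rho> (Zs n)))"
    using assms(1) unfolding risk_measure_L1_def by (elim conjE) assumption
  then show ?thesis using assms(2-4) by blast
qed

text \<open>The quotient is set to \<open>0\<close> where \<open>D\<close> vanishes; that set is null for the measure with
  density \<open>D\<close>, so the junk value never matters.\<close>

definition density_quotient :: "('a \<Rightarrow> real) \<Rightarrow> ('a \<Rightarrow> real) \<Rightarrow> 'a \<Rightarrow> real" where
  "density_quotient D W x = (if 0 < D x then W x / D x else 0)"

lemma density_quotient_measurable:
  assumes [measurable]: "D \<in> borel_measurable M" "W \<in> borel_measurable M"
  shows "density_quotient D W \<in> borel_measurable M"
  unfolding density_quotient_def by measurable

lemma density_quotient_mult: "0 < D x \<Longrightarrow> density_quotient D (\<lambda>x. Z x * D x) x = Z x"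
  by (simp add: density_quotient_def)

lemma abs_mult_density_quotient:
  assumes "0 \<le> D x"
  shows "D x * \<bar>density_quotient D W x\<bar> = (if 0 < D x then \<bar>W x\<bar> else 0)"
  using assms by (auto simp: density_quotient_def abs_mult)

lemma integrable_density_quotient:
  assumes D: "D \<in> borel_measurable P" "\<And>x. 0 \<le> D x" and W: "integrable P W"
  shows "integrable (density P (\<lambda>x. ennreal (D x))) (density_quotient D W)"
proof -
  have meas: "density_quotient D W \<in> borel_measurable P"
    by (rule density_quotient_measurable[OF D(1) borel_measurable_integrable[OF W]])
  have "norm (D x *\<^sub>R density_quotient D W x) \<le> norm (W x)" for x
    using abs_mult_density_quotient[of D x W, OF D(2)] D(2)[of x] by (simp add: abs_mult split: if_splits)
  moreover have "(\<lambda>x. D x *\<^sub>R density_quotient D W x) \<in> borel_measurable P"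
    using D(1) meas by measurable
  ultimately have "integrable P (\<lambda>x. D x *\<^sub>R density_quotient D W x)"
    by (intro Bochner_Integration.integrable_bound[OF W] AE_I2)
  then show ?thesis by (subst integrable_density[OF meas D(1)]) (auto intro: D(2))
qed

lemma L1_dist_density_quotient_le:
  assumes D: "D \<in> borel_measurable P" "\<And>x. 0 \<le> D x" and W: "integrable P W" and V: "integrable P V"
  shows "(\<integral>x. \<bar>density_quotient D W x - density_quotient D V x\<bar> \<partial>density P (\<lambda>x. ennreal (D x)))
           \<le> (\<integral>x. \<bar>W x - V x\<bar> \<partial>P)"
proof -
  let ?U = "\<lambda>x. W x - V x"
  have diff: "density_quotient D W x - density_quotient D V x = density_quotient D ?U x" for x
    by (simp add: density_quotient_def diff_divide_distrib)
  have U: "integrable P ?U" using W V by simp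
  have meas: "(\<lambda>x. \<bar>density_quotient D ?U x\<bar>) \<in> borel_measurable P"
    by (rule borel_measurable_abs[OF density_quotient_measurable[OF D(1) borel_measurable_integrable[OF U]]])
  have "(\<integral>x. \<bar>density_quotient D ?U x\<bar> \<partial>density P (\<lambda>x. ennreal (D x)))
      = (\<integral>x. D x * \<bar>density_quotient D ?U x\<bar> \<partial>P)"
    using integral_density[OF meas D(1)] D(2) by simp
  moreover have "(\<integral>x. D x * \<bar>density_quotient D ?U x\<bar> \<partial>P) = (\<integral>x. (if 0 < D x then \<bar>?U x\<bar> else 0) \<partial>P)"
    by (intro Bochner_Integration.integral_cong refl abs_mult_density_quotient D(2))
  moreover have "(\<integral>x. (if 0 < D x then \<bar>?U x\<bar> else 0) \<partial>P) \<le> (\<integral>x. \<bar>?U x\<bar> \<partial>P)"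
  proof (rule integral_mono)
    have "(\<lambda>x. if 0 < D x then \<bar>?U x\<bar> else 0) \<in> borel_measurable P"
      using D(1) borel_measurable_integrable[OF U] by measurable
    then show "integrable P (\<lambda>x. if 0 < D x then \<bar>?U x\<bar> else 0)"
      by (rule Bochner_Integration.integrable_bound[OF integrable_abs[OF U]]) (intro AE_I2, simp)
    show "integrable P (\<lambda>x. \<bar>?U x\<bar>)" using U by (rule integrable_abs)
  qed simp
  ultimately show ?thesis unfolding diff by simp
qed

lemma risk_measure_L1_density_quotient:
  assumes D: "D \<in> borel_measurable P" "\<And>x. 0 \<le> D x"
    and r: "risk_measure_L1 (density P (\<lambda>x. ennreal (D x))) r"
  shows "risk_measure_L1 P (\<lambda>W. r (density_quotient D W))"
  unfolding risk_measure_L1_def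
proof (intro conjI allI impI)
  note int = integrable_density_quotient[OF D]
  fix Z W :: "'a \<Rightarrow> real" assume Z: "integrable P Z" and W: "integrable P W"
    and ZW: "AE x in P. Z x = W x"
  from ZW have "AE x in P. 0 < ennreal (D x) \<longrightarrow> density_quotient D Z x = density_quotient D W x"
    by eventually_elim (simp add: density_quotient_def)
  then have "AE x in density P (\<lambda>x. ennreal (D x)). density_quotient D Z x = density_quotient D W x"
    using D(1) by (subst AE_density) simp_all
  then show "r (density_quotient D Z) = r (density_quotient D W)"
    using risk_measure_L1_AE_cong[OF r int[OF Z] borel_measurable_integrable[OF int[OF W]]] by simp
next
  fix Z W :: "'a \<Rightarrow> real" and t :: real
  assume "integrable P Z" "integrable P W" "0 \<le> t" "t \<le> 1"
  moreover have "density_quotient D (\<lambda>x. t * Z x + (1 - t) * W x)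
      = (\<lambda>x. t * density_quotient D Z x + (1 - t) * density_quotient D W x)"
    by (simp add: density_quotient_def add_divide_distrib fun_eq_iff)
  ultimately show "r (density_quotient D (\<lambda>x. t * Z x + (1 - t) * W x))
      \<le> t * r (density_quotient D Z) + (1 - t) * r (density_quotient D W)"
    using risk_measure_L1_convex[OF r integrable_density_quotient[OF D]
        integrable_density_quotient[OF D]] by simp
next
  fix Z :: "'a \<Rightarrow> real" and t :: real assume "integrable P Z" "0 < t"
  moreover have "density_quotient D (\<lambda>x. t * Z x) = (\<lambda>x. t * density_quotient D Z x)"
    by (simp add: density_quotient_def fun_eq_iff)
  ultimately show "r (density_quotient D (\<lambda>x. t * Z x)) = t * r (density_quotient D Z)"
    using risk_measure_L1_pos_homogeneous[OF r integrable_density_quotient[OF D]] by simp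
next
  fix Z :: "'a \<Rightarrow> real" and Zs assume Z: "integrable P Z" and Zs: "\<forall>n. integrable P (Zs n)"
    and lim: "(\<lambda>n. \<integral>x. \<bar>Zs n x - Z x\<bar> \<partial>P) \<longlonglongrightarrow> 0"
  have "(\<lambda>n. \<integral>x. \<bar>density_quotient D (Zs n) x - density_quotient D Z x\<bar> \<partial>density P (\<lambda>x. ennreal (D x)))
          \<longlonglongrightarrow> 0"
  proof (rule Lim_null_comparison[OF _ lim], intro always_eventually allI)
    fix n
    show "norm (\<integral>x. \<bar>density_quotient D (Zs n) x - density_quotient D Z x\<bar> \<partial>density P (\<lambda>x. ennreal (D x)))
        \<le> (\<integral>x. \<bar>Zs n x - Z x\<bar> \<partial>P)"
      using L1_dist_density_quotient_le[OF D spec[OF Zs] Z] by (simp add: integral_nonneg_AE)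
  qed
  then show "ereal (r (density_quotient D Z)) \<le> liminf (\<lambda>n. ereal (r (density_quotient D (Zs n))))"
    using Zs by (intro risk_measure_L1_lsc[OF r integrable_density_quotient[OF D Z]]
        integrable_density_quotient[OF D]) simp_all
qed

lemma risk_measure_L1_change_of_law:
  assumes "sigma_finite_measure P" "finite_measure Q" "absolutely_continuous P Q" "sets Q = sets P"
    and r: "risk_measure_L1 Q r"
  shows "\<exists>D. risk_measure_L1 P (\<lambda>W. r (density_quotient D W)) \<and>
    (\<forall>Z. integrable Q Z \<longrightarrow>
      integrable P (\<lambda>x. Z x * D x) \<and> r (density_quotient D (\<lambda>x. Z x * D x)) = r Z)"
proof -
  interpret P: sigma_finite_measure P by fact
  obtain D where D: "D \<in> borel_measurable P" "\<And>x. 0 \<le> D x"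
    and RN: "AE x in P. RN_deriv P Q x = ennreal (D x)" and pos: "AE x in Q. 0 < D x"
    using P.real_RN_deriv[OF assms(2-4)] by metis
  have Q_eq: "Q = density P (\<lambda>x. ennreal (D x))"
    using density_cong[OF _ _ RN] D P.density_RN_deriv[OF assms(3,4)] by simp
  have DQ: "D \<in> borel_measurable Q" using D(1) assms(4) by simp
  show ?thesis
  proof (intro exI conjI allI impI)
    show "risk_measure_L1 P (\<lambda>W. r (density_quotient D W))"
      using risk_measure_L1_density_quotient[OF D] r Q_eq by simp
  next
    fix Z :: "'a \<Rightarrow> real" assume Z: "integrable Q Z"
    moreover have "Z \<in> borel_measurable P" using Z assms(4) by simp
    ultimately show "integrable P (\<lambda>x. Z x * D x)"
      using D by (simp add: Q_eq integrable_density mult.commute)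
    have "AE x in Q. Z x = density_quotient D (\<lambda>x. Z x * D x) x"
      using pos by (auto simp: density_quotient_mult elim: eventually_mono)
    moreover have "density_quotient D (\<lambda>x. Z x * D x) \<in> borel_measurable Q"
      using Z DQ by (intro density_quotient_measurable borel_measurable_times) auto
    ultimately show "r (density_quotient D (\<lambda>x. Z x * D x)) = r Z"
      using risk_measure_L1_AE_cong[OF r Z] by simp
  qed
qed

lemma cond_rep_risk_eq:
  assumes "X \<in> measurable M borel" "risk_measure_L1 (distr M borel X) \<rho>"
    and "cond_rep M X V g" "cond_rep M X V h" "integrable (distr M borel X) h"
  shows "\<rho> g = \<rho> h"
proof -
  have [measurable]: "g \<in> borel_measurable borel" "h \<in> borel_measurable borel"
    and g_rep: "AE w in M. V w = g (X w)" and h_rep: "AE w in M. V w = h (X w)"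
    using assms(3,4) unfolding cond_rep_def by blast+
  from g_rep h_rep have "AE w in M. h (X w) = g (X w)"
    by eventually_elim simp
  moreover have "{x \<in> space borel. h x = g x} \<in> sets borel"
    by measurable
  ultimately have "AE x in distr M borel X. h x = g x"
    by (simp add: AE_distr_iff[OF assms(1)])
  then have "\<rho> h = \<rho> g"
    by (rule risk_measure_L1_AE_cong[OF assms(2,5), rotated]) simp
  then show ?thesis by simp
qed

lemma conditional_risk_representative:
  assumes "prob_space M" "X \<in> borel_measurable M" "1 \<le> p"
    and "cond_risk_mapping M X Y p p' rhat"
    and "\<And>z w. F z (X w) = rhat (\<lambda>_ y. loss z y) w"
    and "memLp (distr M borel X) p (\<lambda>x. F (f x) x)"
    and "memLp (distr M borel (\<lambda>w. (X w, Y w))) p' (\<lambda>(x, y). loss (f x) y)"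
  shows "integrable (distr M borel X) (\<lambda>x. F (f x) x)"
    and "cond_rep M X (rhat (\<lambda>x y. loss (f x) y)) (\<lambda>x. F (f x) x)"
proof -
  show int: "integrable (distr M borel X) (\<lambda>x. F (f x) x)"
    using memLp_imp_integrable[OF prob_space.prob_space_distr[OF assms(1,2)] assms(3,6)] .
  have "rhat (\<lambda>x y. loss (f x) y) w = F (f (X w)) (X w)" for w
  proof -
    have "rhat (\<lambda>x y. loss (f x) y) w = rhat (\<lambda>_ y. loss (f (X w)) y) w"
      using assms(4)[unfolded cond_risk_mapping_def, rule_format, OF assms(7)] by blast
    also have "\<dots> = F (f (X w)) (X w)"
      by (rule assms(5)[symmetric])
    finally show ?thesis .
  qed
  moreover have "(\<lambda>x. F (f x) x) \<in> borel_measurable borel"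
    using borel_measurable_integrable[OF int] by simp
  ultimately show "cond_rep M X (rhat (\<lambda>x y. loss (f x) y)) (\<lambda>x. F (f x) x)"
    unfolding cond_rep_def by simp
qed

lemma conditional_risk_change_of_law:
  assumes M: "prob_space M" and X0: "X0 \<in> borel_measurable M" and X: "X \<in> borel_measurable M"
    and p: "1 \<le> p" and crm: "cond_risk_mapping M X Y p p' rhat"
    and F: "\<And>z w. F z (X w) = rhat (\<lambda>_ y. loss z y) w"
    and F_Lp: "\<And>f. f \<in> FF \<Longrightarrow> memLp (distr M borel X) p (\<lambda>x. F (f x) x)"
    and loss_Lp: "\<And>f. f \<in> FF \<Longrightarrow> memLp (distr M borel (\<lambda>w. (X w, Y w))) p' (\<lambda>(x, y). loss (f x) y)"
    and \<rho>: "risk_measure_L1 (distr M borel X) \<rho>"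
    and ac: "absolutely_continuous (distr M borel X0) (distr M borel X)"
  shows "\<exists>\<rho>' G. risk_measure_L1 (distr M borel X0) \<rho>' \<and>
    (\<forall>f\<in>FF. integrable (distr M borel X0) (\<lambda>x. G (f x) x)) \<and>
    (\<forall>f\<in>FF. \<forall>g. cond_rep M X (rhat (\<lambda>x y. loss (f x) y)) g \<longrightarrow> \<rho> g = \<rho>' (\<lambda>x. G (f x) x))"
proof -
  have "prob_space (distr M borel X0)" "prob_space (distr M borel X)"
    using prob_space.prob_space_distr[OF M] X0 X by auto
  then obtain D where D_risk: "risk_measure_L1 (distr M borel X0) (\<lambda>W. \<rho> (density_quotient D W))"
    and D_rep: "\<forall>Z. integrable (distr M borel X) Z \<longrightarrow> integrable (distr M borel X0) (\<lambda>x. Z x * D x) \<and>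
      \<rho> (density_quotient D (\<lambda>x. Z x * D x)) = \<rho> Z"
    using risk_measure_L1_change_of_law[OF prob_space_imp_sigma_finite prob_space.finite_measure ac _ \<rho>]
    by auto
  have F_int: "integrable (distr M borel X) (\<lambda>x. F (f x) x)"
    and F_rep: "cond_rep M X (rhat (\<lambda>x y. loss (f x) y)) (\<lambda>x. F (f x) x)" if "f \<in> FF" for f
    using conditional_risk_representative[where f = f, OF M X p crm F F_Lp[OF that] loss_Lp[OF that]]
    by blast+
  show ?thesis
  proof (intro exI[of _ "\<lambda>W. \<rho> (density_quotient D W)"] exI[of _ "\<lambda>z x. F z x * D x"] conjI ballI allI impI)
    show "risk_measure_L1 (distr M borel X0) (\<lambda>W. \<rho> (density_quotient D W))" by (rule D_risk)
    fix f assume f: "f \<in> FF"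
    show "integrable (distr M borel X0) (\<lambda>x. F (f x) x * D x)"
      using D_rep F_int[OF f] by blast
    fix g assume "cond_rep M X (rhat (\<lambda>x y. loss (f x) y)) g"
    then have "\<rho> g = \<rho> (\<lambda>x. F (f x) x)"
      by (rule cond_rep_risk_eq[OF X \<rho> _ F_rep[OF f] F_int[OF f]])
    then show "\<rho> g = \<rho> (density_quotient D (\<lambda>x. F (f x) x * D x))"
      using D_rep F_int[OF f] by simp
  qed
qed

theorem theorem2:
  fixes M :: "'w measure"
    and X :: "nat \<Rightarrow> 'w \<Rightarrow> real^'d"
    and Y :: "nat \<Rightarrow> 'w \<Rightarrow> real"
    and m :: nat and p p' :: ennreal
    and rhat :: "nat \<Rightarrow> (real^'d \<Rightarrow> real \<Rightarrow> real) \<Rightarrow> 'w \<Rightarrow> real"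
    and loss :: "nat \<Rightarrow> real^'k \<Rightarrow> real \<Rightarrow> real"
    and F :: "nat \<Rightarrow> real^'k \<Rightarrow> real^'d \<Rightarrow> real"
    and FF :: "(real^'d \<Rightarrow> real^'k) set"
    and \<rho> :: "nat \<Rightarrow> (real^'d \<Rightarrow> real) \<Rightarrow> real"
    and c :: "nat \<Rightarrow> real"
  assumes prob: "prob_space M" and compl: "complete_measure M"
    and XY_meas: "\<And>i. i \<le> m \<Longrightarrow> X i \<in> borel_measurable M \<and> Y i \<in> borel_measurable M"
    and pp': "1 \<le> p" "1 \<le> p'"
    and loss_nonneg: "\<And>i z y. i \<le> m \<Longrightarrow> 0 \<le> loss i z y"
    and FF_meas: "\<And>f. f \<in> FF \<Longrightarrow> f \<in> borel_measurable borel"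
    and crm: "\<And>i. i \<le> m \<Longrightarrow> cond_risk_mapping M (X i) (Y i) p p' (rhat i)"
    and F_def: "\<And>i z w. i \<le> m \<Longrightarrow> F i z (X i w) = rhat i (\<lambda>_ y. loss i z y) w"
    and F_Lp: "\<And>i f. i \<le> m \<Longrightarrow> f \<in> FF \<Longrightarrow> memLp (distr M borel (X i)) p (\<lambda>x. F i (f x) x)"
    and rho: "\<And>i. i \<le> m \<Longrightarrow> risk_measure_L1 (distr M borel (X i)) (\<rho> i)"
    and A1_ac: "\<And>i. 1 \<le> i \<Longrightarrow> i \<le> m \<Longrightarrow>
                   absolutely_continuous (distr M borel (X 0)) (distr M borel (X i))"
    and A1_na: "nonatomic (distr M borel (X 0))"
    and A2_Lp: "\<And>i f. i \<le> m \<Longrightarrow> f \<in> FF \<Longrightarrow>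
                   memLp (distr M borel (\<lambda>w. (X i w, Y i w))) p' (\<lambda>(x, y). loss i (f x) y)"
    and A2_dec: "decomposable FF"
  shows "(\<forall>f\<in>FF. \<forall>g. cond_rep M (X 0) (rhat 0 (\<lambda>x y. loss 0 (f x) y)) g \<longrightarrow>
                      \<rho> 0 g = \<rho> 0 (\<lambda>x. F 0 (f x) x)) \<and>
         (\<exists>rhot :: nat \<Rightarrow> (real^'d \<Rightarrow> real) \<Rightarrow> real. \<exists>G :: nat \<Rightarrow> real^'k \<Rightarrow> real^'d \<Rightarrow> real.
            (\<forall>i\<in>{1..m}.
               risk_measure_L1 (distr M borel (X 0)) (rhot i) \<and>
               (\<forall>f\<in>FF. integrable (distr M borel (X 0)) (\<lambda>x. G i (f x) x)) \<and>
               (\<forall>f\<in>FF. \<forall>g. cond_rep M (X i) (rhat i (\<lambda>x y. loss i (f x) y)) g \<longrightarrow>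
                      \<rho> i g = rhot i (\<lambda>x. G i (f x) x))) \<and>
            (\<forall>f\<in>FF. (\<forall>i\<in>{1..m}. \<forall>g. cond_rep M (X i) (rhat i (\<lambda>x y. loss i (f x) y)) g \<longrightarrow>
                                     \<rho> i g \<le> c i) \<longleftrightarrow>
                     (\<forall>i\<in>{1..m}. rhot i (\<lambda>x. G i (f x) x) \<le> c i)))"
proof -
  have X_meas: "X i \<in> borel_measurable M" if "i \<le> m" for i
    using XY_meas[OF that] by simp
  have F_int: "integrable (distr M borel (X i)) (\<lambda>x. F i (f x) x)"
    and F_rep: "cond_rep M (X i) (rhat i (\<lambda>x y. loss i (f x) y)) (\<lambda>x. F i (f x) x)"
    if "i \<le> m" "f \<in> FF" for i f
    using conditional_risk_representative[where loss = "loss i" and f = f and F = "F i",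
        OF prob X_meas[OF that(1)] pp'(1) crm[OF that(1)] F_def[OF that(1)] F_Lp[OF that] A2_Lp[OF that]]
    by blast+
  have risk_F: "\<rho> i g = \<rho> i (\<lambda>x. F i (f x) x)"
    if "i \<le> m" "f \<in> FF" "cond_rep M (X i) (rhat i (\<lambda>x y. loss i (f x) y)) g" for i f g
    by (rule cond_rep_risk_eq[OF X_meas rho that(3) F_rep F_int]) (use that in simp_all)
  define reformulates where "reformulates i \<rho>' G \<longleftrightarrow>
    risk_measure_L1 (distr M borel (X 0)) \<rho>' \<and>
    (\<forall>f\<in>FF. integrable (distr M borel (X 0)) (\<lambda>x. G (f x) x)) \<and>
    (\<forall>f\<in>FF. \<forall>g. cond_rep M (X i) (rhat i (\<lambda>x y. loss i (f x) y)) g \<longrightarrow> \<rho> i g = \<rho>' (\<lambda>x. G (f x) x))"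
    for i \<rho>' G
  have "\<forall>i\<in>{1..m}. \<exists>\<rho>' G. reformulates i \<rho>' G"
  proof
    fix i assume "i \<in> {1..m}"
    then have i: "1 \<le> i" "i \<le> m" by auto
    show "\<exists>\<rho>' G. reformulates i \<rho>' G"
      unfolding reformulates_def
      by (rule conditional_risk_change_of_law[where X = "X i" and Y = "Y i" and rhat = "rhat i" and
            loss = "loss i" and F = "F i" and \<rho> = "\<rho> i",
            OF prob X_meas[of 0] X_meas[OF i(2)] pp'(1) crm[OF i(2)] F_def[OF i(2)]
            F_Lp[OF i(2)] A2_Lp[OF i(2)] rho[OF i(2)] A1_ac[OF i]]) simp
  qed
  from bchoice[OF this] obtain rhot where "\<forall>i\<in>{1..m}. \<exists>G. reformulates i (rhot i) G"
    by blast
  from bchoice[OF this] obtain G where "\<forall>i\<in>{1..m}. reformulates i (rhot i) (G i)"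
    by blast
  then have reformulation: "\<forall>i\<in>{1..m}. risk_measure_L1 (distr M borel (X 0)) (rhot i) \<and>
      (\<forall>f\<in>FF. integrable (distr M borel (X 0)) (\<lambda>x. G i (f x) x)) \<and>
      (\<forall>f\<in>FF. \<forall>g. cond_rep M (X i) (rhat i (\<lambda>x y. loss i (f x) y)) g \<longrightarrow> \<rho> i g = rhot i (\<lambda>x. G i (f x) x))"
    unfolding reformulates_def .
  show ?thesis
  proof (intro conjI exI[of _ rhot] exI[of _ G] reformulation ballI)
    show "\<forall>g. cond_rep M (X 0) (rhat 0 (\<lambda>x y. loss 0 (f x) y)) g \<longrightarrow> \<rho> 0 g = \<rho> 0 (\<lambda>x. F 0 (f x) x)"
      if "f \<in> FF" for f
      using risk_F[OF _ that] by simp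
    show "(\<forall>i\<in>{1..m}. \<forall>g. cond_rep M (X i) (rhat i (\<lambda>x y. loss i (f x) y)) g \<longrightarrow> \<rho> i g \<le> c i) \<longleftrightarrow>
        (\<forall>i\<in>{1..m}. rhot i (\<lambda>x. G i (f x) x) \<le> c i)" if "f \<in> FF" for f
      using reformulation F_rep[OF _ that] that by fastforce
  qed
qed

end
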